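(* The Steiner–Plücker configuration is isomorphic to the incidence structure $\mathcal S$ whose points are the 20 four-element subsets of $\{0,1,\dots,6\}$ containing $0$, whose lines are the 15 three-element subsets of $\{0,1,\dots,6\}$ containing $0$, and in which a point is incident with a line iff the line's subset is contained in the point's subset. (Geometrically: these are the intersection points of the quadruples and the intersection lines of the triples, each containing $H_0$, of seven hyperplanes $H_0,\dots,H_6$ in general position in projective 4-space, which after a suitable projection to the plane form the Steiner–Plücker configuration.)
   Context: Steiner–Plücker configuration $(20_3,15_4)$: consider three triangles $A_iB_iC_i$ ($i=1,2,3$) in the projective plane, perspective from a common point $O$ (so $O,A_1,A_2,A_3$ are collinear, likewise for the $B$'s and the $C$'s). For each pair $i<j$, corresponding sides meet in three points $A_iB_i\cap A_jB_j$, $B_iC_i\cap B_jC_j$, $C_iA_i\cap C_jA_j$, which lie on the axis of perspectivity $a_{ij}$; the three axes $a_{12},a_{13},a_{23}$ pass through a common point $Z$. Combinatorially, the configuration has the 20 points $O$, the 9 vertices, the 9 side-intersection points and $Z$, and the 15 lines: the 3 lines through $O$ and corresponding vertices, the 9 sides, and the 3 axes, with the incidences just described (each line contains 4 of the points, each point lies on 3 of the lines). *)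

theory Defs
  imports Main
begin

text \<open>Combinatorial Steiner--Pluecker configuration (20_3, 15_4).
  Three triangles A_i B_i C_i (i = 1,2,3), perspective from O.\<close>

datatype idx = I1 | I2 | I3
datatype vtx = VA | VB | VC
datatype side = SAB | SBC | SCA

fun endpoints :: "side \<Rightarrow> vtx set" where
  "endpoints SAB = {VA, VB}"
| "endpoints SBC = {VB, VC}"
| "endpoints SCA = {VC, VA}"

text \<open>Points: O; vertices V v i; side-intersection points X s {i,j}
  (the intersection of side s of triangle i with side s of triangle j); Z.\<close>
datatype sp_point = PtO | V vtx idx | X side "idx set" | PtZ

text \<open>Lines: line through O and the three vertices labelled v; side s of
  triangle i; axis of perspectivity a_{ij} of triangles i and j.\<close>
datatype sp_line = Through vtx | SideL side idx | Axis "idx set"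

definition sp_points :: "sp_point set" where
  "sp_points = {PtO} \<union> {V v i | v i. True} \<union> {X s p | s p. card p = 2} \<union> {PtZ}"

definition sp_lines :: "sp_line set" where
  "sp_lines = {Through v | v. True} \<union> {SideL s i | s i. True} \<union> {Axis p | p. card p = 2}"

fun sp_inc :: "sp_point \<Rightarrow> sp_line \<Rightarrow> bool" where
  "sp_inc PtO (Through v) = True"
| "sp_inc (V v i) (Through w) = (v = w)"
| "sp_inc (V v i) (SideL s j) = (i = j \<and> v \<in> endpoints s)"
| "sp_inc (X s p) (SideL t j) = (s = t \<and> j \<in> p)"
| "sp_inc (X s p) (Axis q) = (p = q)"
| "sp_inc PtZ (Axis q) = True"
| "sp_inc _ _ = False"

definition S_points :: "nat set set" where
  "S_points = {P. P \<subseteq> {0..6} \<and> card P = 4 \<and> 0 \<in> P}"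

definition S_lines :: "nat set set" where
  "S_lines = {L. L \<subseteq> {0..6} \<and> card L = 3 \<and> 0 \<in> L}"

definition S_inc :: "nat set \<Rightarrow> nat set \<Rightarrow> bool" where
  "S_inc P L \<longleftrightarrow> L \<subseteq> P"

definition inc_isomorphic ::
  "'p set \<Rightarrow> 'l set \<Rightarrow> ('p \<Rightarrow> 'l \<Rightarrow> bool) \<Rightarrow>
   'q set \<Rightarrow> 'm set \<Rightarrow> ('q \<Rightarrow> 'm \<Rightarrow> bool) \<Rightarrow> bool" where
  "inc_isomorphic P L I P' L' I' \<longleftrightarrow>
     (\<exists>f g. bij_betw f P P' \<and> bij_betw g L L' \<and>
            (\<forall>p\<in>P. \<forall>l\<in>L. I p l \<longleftrightarrow> I' (f p) (g l)))"

end

theory Submission imports Defs begin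

(* Number the triangles by 1, 2, 3 and the vertex labels A, B, C by 4, 5, 6, and encode
  every element of the configuration by the set of hyperplanes H_k containing it.
  O and Z become {0,4,5,6} and {0,1,2,3}; the vertex v of triangle i becomes {0,i} together
  with the two labels other than v; the common point of the sides s of triangles i and j
  becomes {0,i,j,c}, where c is the vertex opposite to s. Dually, the line through O and
  the vertices labelled v becomes {0} together with the two labels other than v, the side s
  of triangle i becomes {0,i,c}, and the axis a_ij becomes {0,i,j}. Under this encoding
  incidence turns into inclusion, and since both structures are finite the remaining
  verification is a finite computation. *)

lemma inc_isomorphic_by_lists:
  assumes "distinct (map f ps)" and "set (map f ps) = P'"
    and "distinct (map g ls)" and "set (map g ls) = L'"
    and "list_all (\<lambda>p. list_all (\<lambda>l. I p l = I' (f p) (g l)) ls) ps"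
  shows "inc_isomorphic (set ps) (set ls) I P' L' I'"
  unfolding inc_isomorphic_def
proof (intro exI conjI)
  show "bij_betw f (set ps) P'" "bij_betw g (set ls) L'"
    using assms(1-4) by (simp_all add: bij_betw_def distinct_map)
  show "\<forall>p\<in>set ps. \<forall>l\<in>set ls. I p l = I' (f p) (g l)"
    using assms(5) by (simp add: list_all_iff)
qed

lemma card_idx_set_eq_2_iff: "card (p::idx set) = 2 \<longleftrightarrow> p \<in> {{I1,I2},{I1,I3},{I2,I3}}"
proof -
  have "p \<in> Pow {I1,I2,I3}"
    using idx.exhaust by blast
  then have "p \<in> {{},{I1},{I2},{I3},{I1,I2},{I1,I3},{I2,I3},{I1,I2,I3}}"
    by (simp add: Pow_insert) blast
  then show ?thesis by auto
qed

definition sp_point_list :: "sp_point list" where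
  "sp_point_list = [PtO, V VA I1, V VA I2, V VA I3, V VB I1, V VB I2, V VB I3,
    V VC I1, V VC I2, V VC I3,
    X SAB {I1,I2}, X SAB {I1,I3}, X SAB {I2,I3}, X SBC {I1,I2}, X SBC {I1,I3}, X SBC {I2,I3},
    X SCA {I1,I2}, X SCA {I1,I3}, X SCA {I2,I3}, PtZ]"

definition sp_line_list :: "sp_line list" where
  "sp_line_list = [Through VA, Through VB, Through VC,
    SideL SAB I1, SideL SAB I2, SideL SAB I3, SideL SBC I1, SideL SBC I2, SideL SBC I3,
    SideL SCA I1, SideL SCA I2, SideL SCA I3, Axis {I1,I2}, Axis {I1,I3}, Axis {I2,I3}]"

lemma sp_points_eq_set_list: "sp_points = set sp_point_list"
proof (rule set_eqI)
  fix x
  show "x \<in> sp_points \<longleftrightarrow> x \<in> set sp_point_list"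
  proof (cases x)
    case (V v i)
    then show ?thesis by (cases v; cases i) (simp_all add: sp_points_def sp_point_list_def)
  next
    case (X s p)
    then show ?thesis
      by (cases s) (auto simp: sp_points_def sp_point_list_def card_idx_set_eq_2_iff)
  qed (simp_all add: sp_points_def sp_point_list_def)
qed

lemma sp_lines_eq_set_list: "sp_lines = set sp_line_list"
proof (rule set_eqI)
  fix x
  show "x \<in> sp_lines \<longleftrightarrow> x \<in> set sp_line_list"
  proof (cases x)
    case (Through v)
    then show ?thesis by (cases v) (simp_all add: sp_lines_def sp_line_list_def)
  next
    case (SideL s i)
    then show ?thesis by (cases s; cases i) (simp_all add: sp_lines_def sp_line_list_def)
  next
    case (Axis p)
    then show ?thesis by (auto simp: sp_lines_def sp_line_list_def card_idx_set_eq_2_iff)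
  qed
qed

lemma S_points_eq_filter_Pow:
  "S_points = Set.filter (\<lambda>P. card P = 4 \<and> 0 \<in> P) (Pow (set [0..<7]))"
  unfolding S_points_def by auto

lemma S_lines_eq_filter_Pow:
  "S_lines = Set.filter (\<lambda>L. card L = 3 \<and> 0 \<in> L) (Pow (set [0..<7]))"
  unfolding S_lines_def by auto

fun idx_num :: "idx \<Rightarrow> nat" where
  "idx_num I1 = 1" | "idx_num I2 = 2" | "idx_num I3 = 3"

fun vtx_num :: "vtx \<Rightarrow> nat" where
  "vtx_num VA = 4" | "vtx_num VB = 5" | "vtx_num VC = 6"

fun opposite_vtx :: "side \<Rightarrow> vtx" where
  "opposite_vtx SAB = VC" | "opposite_vtx SBC = VA" | "opposite_vtx SCA = VB"

fun point_code :: "sp_point \<Rightarrow> nat set" where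
  "point_code PtO = {0,4,5,6}"
| "point_code (V v i) = {0, idx_num i} \<union> ({4,5,6} - {vtx_num v})"
| "point_code (X s p) = insert 0 (insert (vtx_num (opposite_vtx s)) (idx_num ` p))"
| "point_code PtZ = {0,1,2,3}"

fun line_code :: "sp_line \<Rightarrow> nat set" where
  "line_code (Through v) = insert 0 ({4,5,6} - {vtx_num v})"
| "line_code (SideL s i) = {0, idx_num i, vtx_num (opposite_vtx s)}"
| "line_code (Axis p) = insert 0 (idx_num ` p)"

theorem lemma4p4:
  shows "inc_isomorphic sp_points sp_lines sp_inc S_points S_lines S_inc"
  unfolding sp_points_eq_set_list sp_lines_eq_set_list
proof (rule inc_isomorphic_by_lists[where f = point_code and g = line_code])
  show "distinct (map point_code sp_point_list)"
    unfolding sp_point_list_def by code_simp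
  show "set (map point_code sp_point_list) = S_points"
    unfolding S_points_eq_filter_Pow sp_point_list_def by code_simp
  show "distinct (map line_code sp_line_list)"
    unfolding sp_line_list_def by code_simp
  show "set (map line_code sp_line_list) = S_lines"
    unfolding S_lines_eq_filter_Pow sp_line_list_def by code_simp
  show "list_all (\<lambda>p. list_all (\<lambda>l. sp_inc p l = S_inc (point_code p) (line_code l))
      sp_line_list) sp_point_list"
    unfolding sp_point_list_def sp_line_list_def S_inc_def by code_simp
qed

end
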